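(* Suppose $\mathit{Act}$ is finite. Then $\mathcal{E}_{v,f}'$ is sound modulo $\simeq$: for all monitors $m,n$, if $\mathcal{E}_{v,f}'\vdash m=n$ then $m\simeq n$.
   Context: Monitors: terms $m,n ::= v \mid a.m \mid m+n \mid x$ over a finite nonempty action set $\mathit{Act}$ and variables $x$, verdicts $v::=\mathit{end}\mid\mathit{yes}\mid\mathit{no}$. $\sum_{i\in I}m_i$ is $\mathit{end}$ for $I=\emptyset$. Semantics: $\xrightarrow{\alpha}$ ($\alpha\in\mathit{Act}\cup\{\tau\}$) is the least relation with $a.m\xrightarrow{a}m$; $m\xrightarrow{\alpha}m'$ implies $m+n\xrightarrow{\alpha}m'$ and $n+m\xrightarrow{\alpha}m'$; $v\xrightarrow{\alpha}v$ for verdicts $v$. Weak transitions: $m\xRightarrow{\varepsilon}m'$ iff $m(\xrightarrow{\tau})^*m'$; $m\xRightarrow{a}m'$ iff $m\xRightarrow{\varepsilon}\xrightarrow{a}\xRightarrow{\varepsilon}m'$; $m\xRightarrow{as'}m'$ ($s'\ne\varepsilon$) iff $m\xRightarrow{a}m_1\xRightarrow{s'}m'$. For closed $m$, $L_a(m)=\{s\mid m\xRightarrow{s}\mathit{yes}\}$, $L_r(m)=\{s\mid m\xRightarrow{s}\mathit{no}\}$; $m\simeq n$ iff $L_a,L_r$ coincide for closed terms, and iff $\sigma(m)\simeq\sigma(n)$ for all closed substitutions $\sigma$ for open terms. Notation for $s\in\mathit{Act}^*$: $s.m$ is $a_1.(\cdots a_k.m)$ if $s=a_1\dots a_k$ ($\varepsilon.m=m$);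 $s^1=s$, $s^i=s s^{i-1}$; $\mathit{pre}(s)$ is the set of prefixes of $s$ (including $\varepsilon$ and $s$); $\overline{s}^{\le}(m)=\sum_{s'\in\mathit{Act}^*,\ |s'|\le|s|,\ s'\notin\mathit{pre}(s)}s'.m$; $\overline{s}(m)=\overline{s}^{\le}(m)+s.\sum_{a\in\mathit{Act}}a.m$; for $k\ge1$, $\overline{s}^{(1)}(m)=\overline{s}(m)$ and for $k\ge2$, $\overline{s}^{(k)}(m)=\sum_{1\le i<k-1}s^i.\overline{s}^{\le}(m)+s^{k-1}.\overline{s}(m)$. $\mathcal{E}\vdash m=n$ denotes derivability by reflexivity, symmetry, transitivity, substitution and congruence for $a.\_$ and $+$. $\mathcal{E}_v$: (A1) $x+y=y+x$; (A2) $x+(y+z)=(x+y)+z$; (A3) $x+x=x$; (A4) $x+\mathit{end}=x$; for each $a\in\mathit{Act}$: ($E_a$) $a.\mathit{end}=\mathit{end}$; ($Y_a$) $\mathit{yes}=\mathit{yes}+a.\mathit{yes}$; ($N_a$) $\mathit{no}=\mathit{no}+a.\mathit{no}$; ($D_a$) $a.(x+y)=a.x+a.y$. $\mathcal{E}_v'=\mathcal{E}_v\cup\{O1\}$ with (O1) $\mathit{yes}+\mathit{no}=\mathit{yes}+\mathit{no}+x$. $\mathcal{O}=\{O2_{s,k}\mid s\in\mathit{Act}^*,k\ge1\}$ with ($O2_{s,k}$) $x+s.x+\overline{s}^{(k)}(\mathit{yes}+\mathit{no})=x+\overline{s}^{(k)}(\mathit{yes}+\mathit{no})$. $\mathcal{E}_{v,f}'=\mathcal{E}_v'\cup\mathcal{O}$.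 *)

theory Defs
  imports Main "HOL-Library.Sublist"
begin

datatype verdict = End | Yes | No

datatype 'a mon =
    Verd verdict
  | Pre 'a "'a mon"
  | Sum "'a mon" "'a mon"
  | Var nat

text \<open>Actions: Some a = visible action a, None = tau.\<close>

inductive step :: "'a mon \<Rightarrow> 'a option \<Rightarrow> 'a mon \<Rightarrow> bool" where
  step_pre: "step (Pre a m) (Some a) m"
| step_suml: "step m \<alpha> m' \<Longrightarrow> step (Sum m n) \<alpha> m'"
| step_sumr: "step m \<alpha> m' \<Longrightarrow> step (Sum n m) \<alpha> m'"
| step_verd: "step (Verd v) \<alpha> (Verd v)"

definition wtau :: "'a mon \<Rightarrow> 'a mon \<Rightarrow> bool" where
  "wtau = (\<lambda>m m'. step m None m')\<^sup>*\<^sup>*"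

definition wact :: "'a mon \<Rightarrow> 'a \<Rightarrow> 'a mon \<Rightarrow> bool" where
  "wact m a m' = (\<exists>m1 m2. wtau m m1 \<and> step m1 (Some a) m2 \<and> wtau m2 m')"

fun wtrans :: "'a mon \<Rightarrow> 'a list \<Rightarrow> 'a mon \<Rightarrow> bool" where
  "wtrans m [] m' = wtau m m'"
| "wtrans m [a] m' = wact m a m'"
| "wtrans m (a # b # s) m' = (\<exists>m1. wact m a m1 \<and> wtrans m1 (b # s) m')"

definition La :: "'a mon \<Rightarrow> 'a list set" where
  "La m = {s. wtrans m s (Verd Yes)}"

definition Lr :: "'a mon \<Rightarrow> 'a list set" where
  "Lr m = {s. wtrans m s (Verd No)}"

fun fv :: "'a mon \<Rightarrow> nat set" where
  "fv (Verd v) = {}"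
| "fv (Pre a m) = fv m"
| "fv (Sum m n) = fv m \<union> fv n"
| "fv (Var x) = {x}"

definition closed :: "'a mon \<Rightarrow> bool" where
  "closed m = (fv m = {})"

fun subst :: "(nat \<Rightarrow> 'a mon) \<Rightarrow> 'a mon \<Rightarrow> 'a mon" where
  "subst \<sigma> (Verd v) = Verd v"
| "subst \<sigma> (Pre a m) = Pre a (subst \<sigma> m)"
| "subst \<sigma> (Sum m n) = Sum (subst \<sigma> m) (subst \<sigma> n)"
| "subst \<sigma> (Var x) = \<sigma> x"

definition meq :: "'a mon \<Rightarrow> 'a mon \<Rightarrow> bool" where
  "meq m n = (if closed m \<and> closed n then La m = La n \<and> Lr m = Lr n
     else (\<forall>\<sigma>. (\<forall>x. closed (\<sigma> x)) \<longrightarrow>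
             La (subst \<sigma> m) = La (subst \<sigma> n) \<and> Lr (subst \<sigma> m) = Lr (subst \<sigma> n)))"

fun sumlist :: "'a mon list \<Rightarrow> 'a mon" where
  "sumlist [] = Verd End"
| "sumlist [m] = m"
| "sumlist (m # n # ms) = Sum m (sumlist (n # ms))"

definition msum :: "'a mon set \<Rightarrow> 'a mon" where
  "msum S = sumlist (SOME xs. distinct xs \<and> set xs = S)"

definition pref :: "'a list \<Rightarrow> 'a mon \<Rightarrow> 'a mon" where
  "pref s m = foldr Pre s m"

definition lpow :: "'a list \<Rightarrow> nat \<Rightarrow> 'a list" where
  "lpow s i = concat (replicate i s)"

definition sbar_le :: "'a list \<Rightarrow> 'a mon \<Rightarrow> 'a mon" where
  "sbar_le s m = msum {pref s' m | s'. length s' \<le> length s \<and> \<not> prefix s' s}"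

definition sbar :: "'a list \<Rightarrow> 'a mon \<Rightarrow> 'a mon" where
  "sbar s m = Sum (sbar_le s m) (pref s (msum {Pre a m | a. a \<in> UNIV}))"

definition sbar_k :: "'a list \<Rightarrow> nat \<Rightarrow> 'a mon \<Rightarrow> 'a mon" where
  "sbar_k s k m = (if k = 1 then sbar s m
     else Sum (msum {pref (lpow s i) (sbar_le s m) | i. 1 \<le> i \<and> i < k - 1})
              (pref (lpow s (k - 1)) (sbar s m)))"

abbreviation "vx \<equiv> Var 0"
abbreviation "vy \<equiv> Var 1"
abbreviation "vz \<equiv> Var 2"
abbreviation "yes \<equiv> Verd Yes"
abbreviation "no \<equiv> Verd No"
abbreviation "endm \<equiv> Verd End"

definition Ev :: "('a mon \<times> 'a mon) set" where
  "Ev = {(Sum vx vy, Sum vy vx),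
         (Sum vx (Sum vy vz), Sum (Sum vx vy) vz),
         (Sum vx vx, vx),
         (Sum vx endm, vx)}
      \<union> (\<Union>a. {(Pre a endm, endm),
               (yes, Sum yes (Pre a yes)),
               (no, Sum no (Pre a no)),
               (Pre a (Sum vx vy), Sum (Pre a vx) (Pre a vy))})"

definition Ev' :: "('a mon \<times> 'a mon) set" where
  "Ev' = Ev \<union> {(Sum yes no, Sum (Sum yes no) vx)}"

definition O2 :: "('a mon \<times> 'a mon) set" where
  "O2 = {(Sum (Sum vx (pref s vx)) (sbar_k s k (Sum yes no)),
          Sum vx (sbar_k s k (Sum yes no))) | s k. k \<ge> 1}"

definition Evf' :: "('a mon \<times> 'a mon) set" where
  "Evf' = Ev' \<union> O2"

inductive deriv :: "('a mon \<times> 'a mon) set \<Rightarrow> 'a mon \<Rightarrow> 'a mon \<Rightarrow> bool"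
  for E :: "('a mon \<times> 'a mon) set" where
  d_ax: "(m, n) \<in> E \<Longrightarrow> deriv E m n"
| d_refl: "deriv E m m"
| d_sym: "deriv E m n \<Longrightarrow> deriv E n m"
| d_trans: "deriv E m n \<Longrightarrow> deriv E n p \<Longrightarrow> deriv E m p"
| d_subst: "deriv E m n \<Longrightarrow> deriv E (subst \<sigma> m) (subst \<sigma> n)"
| d_pre: "deriv E m n \<Longrightarrow> deriv E (Pre a m) (Pre a n)"
| d_sum: "deriv E m m' \<Longrightarrow> deriv E n n' \<Longrightarrow> deriv E (Sum m n) (Sum m' n')"

end

(*
  Only verdicts perform tau-moves, and they loop on every action, so the yes- and no-languages
  of a monitor are compositional: a prefix a.m prepends a, a sum is a union, a verdict yields
  every word for its own language and none for the other, and a variable yields none.  In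
  particular these languages are closed under extension, and every axiom of E_v' is sound.  For O2_{s,k}, a word s.u outside the
  language of sbar^(k)(yes + no) forces u to be a prefix of s^(k-1); then u is also a prefix of
  s.u, so s.u already lies in the language of x whenever u does.
*)

theory Submission
  imports Defs
begin

lemma step_Verd [simp]: "step (Verd v) \<alpha> m' \<longleftrightarrow> m' = Verd v"
  by (auto elim: step.cases intro: step.intros)

lemma step_Pre [simp]: "step (Pre a m) \<alpha> m' \<longleftrightarrow> \<alpha> = Some a \<and> m' = m"
  by (auto elim: step.cases intro: step.intros)

lemma step_Sum [simp]: "step (Sum m n) \<alpha> m' \<longleftrightarrow> step m \<alpha> m' \<or> step n \<alpha> m'"
  by (auto elim: step.cases intro: step.intros)

lemma step_Var [simp]: "\<not> step (Var x) \<alpha> m'"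
  by (auto elim: step.cases)

lemma wtau_refl [simp]: "wtau m m"
  unfolding wtau_def by simp

lemma wtau_trans: "wtau m m1 \<Longrightarrow> wtau m1 m2 \<Longrightarrow> wtau m m2"
  unfolding wtau_def by (rule rtranclp_trans)

lemma wtau_Verd [simp]: "wtau (Verd v) m' \<longleftrightarrow> m' = Verd v"
proof
  assume "wtau (Verd v) m'"
  then show "m' = Verd v"
    unfolding wtau_def by (induction rule: rtranclp_induct) auto
qed simp

lemma wtau_Pre [simp]: "wtau (Pre a m) m' \<longleftrightarrow> m' = Pre a m"
  unfolding wtau_def by (auto elim: converse_rtranclpE)

lemma wtau_Var [simp]: "wtau (Var x) m' \<longleftrightarrow> m' = Var x"
  unfolding wtau_def by (auto elim: converse_rtranclpE)

lemma wtau_SumD: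
  assumes "wtau (Sum m n) m'"
  shows "m' = Sum m n \<or> wtau m m' \<or> wtau n m'"
proof -
  have "(\<lambda>m m'. step m None m')\<^sup>*\<^sup>* (Sum m n) m'"
    using assms unfolding wtau_def .
  then show ?thesis
  proof (rule converse_rtranclpE)
    fix z
    assume "step (Sum m n) None z" and "(\<lambda>m m'. step m None m')\<^sup>*\<^sup>* z m'"
    then show ?thesis
      unfolding wtau_def by (auto intro: converse_rtranclp_into_rtranclp)
  qed simp
qed

lemma wtau_step_mono:
  assumes "\<And>z. step m None z \<Longrightarrow> step M None z" and "wtau m m'" and "m' \<noteq> m"
  shows "wtau M m'"
  using assms(2,3) unfolding wtau_def
  by (auto elim: converse_rtranclpE intro: converse_rtranclp_into_rtranclp assms(1))

lemma wact_step_mono: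
  assumes "\<And>\<alpha> z. step m \<alpha> z \<Longrightarrow> step M \<alpha> z" and "wact m a x"
  shows "wact M a x"
proof -
  obtain m1 m2 where m1: "wtau m m1" and m2: "step m1 (Some a) m2" and "wtau m2 x"
    using assms(2) unfolding wact_def by blast
  have "wtau M m1 \<and> step m1 (Some a) m2 \<or> wtau M M \<and> step M (Some a) m2"
    using wtau_step_mono[OF assms(1) m1] m2 assms(1) by (cases "m1 = m") auto
  then show ?thesis
    using \<open>wtau m2 x\<close> unfolding wact_def by blast
qed

lemma wact_Verd [simp]: "wact (Verd v) a x \<longleftrightarrow> x = Verd v"
  by (auto simp: wact_def)

lemma wact_Pre [simp]: "wact (Pre b m) a x \<longleftrightarrow> a = b \<and> wtau m x"
  by (auto simp: wact_def)

lemma wact_Var [simp]: "\<not> wact (Var y) a x"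
  by (auto simp: wact_def)

lemma wact_Sum [simp]: "wact (Sum m n) a x \<longleftrightarrow> wact m a x \<or> wact n a x"
proof
  assume "wact (Sum m n) a x"
  then obtain m1 m2 where "wtau (Sum m n) m1" "step m1 (Some a) m2" "wtau m2 x"
    unfolding wact_def by blast
  then show "wact m a x \<or> wact n a x"
    unfolding wact_def by (metis step_Sum wtau_SumD wtau_refl)
next
  assume "wact m a x \<or> wact n a x"
  then show "wact (Sum m n) a x"
    by (auto intro: wact_step_mono[of m] wact_step_mono[of n])
qed

lemma wtau_Sum_Verd: "wtau (Sum m n) (Verd v) \<longleftrightarrow> wtau m (Verd v) \<or> wtau n (Verd v)"
proof
  assume "wtau m (Verd v) \<or> wtau n (Verd v)"
  moreover have "wtau (Sum m n) (Verd v)" if "m = Verd v \<or> n = Verd v"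
    using that unfolding wtau_def by (auto intro: step.intros)
  ultimately show "wtau (Sum m n) (Verd v)"
    by (metis step_Sum wtau_step_mono)
qed (use wtau_SumD in blast)

lemma wtrans_Cons: "wtrans m (a # s) x \<longleftrightarrow> (\<exists>m1. wact m a m1 \<and> wtrans m1 s x)"
proof (cases s)
  case Nil
  then show ?thesis
    by (simp add: wact_def) (blast intro: wtau_trans wtau_refl)
qed simp

declare wtrans.simps(2,3) [simp del]

lemma wtau_wtrans: "wtau m m1 \<Longrightarrow> wtrans m1 s x \<Longrightarrow> wtrans m s x"
  by (cases s) (auto simp: wtrans_Cons wact_def intro: wtau_trans)

definition Lv :: "verdict \<Rightarrow> 'a mon \<Rightarrow> 'a list set" where
  "Lv v m = {s. wtrans m s (Verd v)}"

lemma La_eq_Lv: "La m = Lv Yes m" and Lr_eq_Lv: "Lr m = Lv No m"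
  unfolding La_def Lr_def Lv_def by auto

lemma Lv_Verd [simp]: "Lv v (Verd v') = (if v = v' then UNIV else {})"
proof -
  have "wtrans (Verd v') s x \<longleftrightarrow> x = Verd v'" for s x
    by (induction s arbitrary: x) (auto simp: wtrans_Cons)
  then show ?thesis
    unfolding Lv_def by auto
qed

lemma Lv_Var [simp]: "Lv v (Var y) = {}"
proof -
  have "\<not> wtrans (Var y) s (Verd v)" for s
    by (cases s) (auto simp: wtrans_Cons)
  then show ?thesis
    unfolding Lv_def by auto
qed

lemma Lv_Pre [simp]: "Lv v (Pre a m) = Cons a ` Lv v m"
proof -
  have "wtrans (Pre a m) s (Verd v) \<longleftrightarrow> (\<exists>s'. s = a # s' \<and> wtrans m s' (Verd v))" for s
    by (cases s) (force simp: wtrans_Cons intro: wtau_wtrans)+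
  then show ?thesis
    unfolding Lv_def by auto
qed

lemma Lv_Sum [simp]: "Lv v (Sum m n) = Lv v m \<union> Lv v n"
proof -
  have "wtrans (Sum m n) s (Verd v) \<longleftrightarrow> wtrans m s (Verd v) \<or> wtrans n s (Verd v)" for s
    by (cases s) (auto simp: wtrans_Cons wtau_Sum_Verd)
  then show ?thesis
    unfolding Lv_def by auto
qed

lemma Lv_append: "w \<in> Lv v m \<Longrightarrow> w @ t \<in> Lv v m"
  by (induction m arbitrary: w) (auto split: if_splits)

lemma Lv_pref [simp]: "Lv v (pref t m) = (@) t ` Lv v m"
  unfolding pref_def by (induction t) (simp_all add: image_image)

lemma Lv_sumlist: "v \<noteq> End \<Longrightarrow> Lv v (sumlist ms) = (\<Union>m\<in>set ms. Lv v m)"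
  by (induction ms rule: sumlist.induct) auto

lemma set_msum_enum: "finite S \<Longrightarrow> set (SOME xs. distinct xs \<and> set xs = S) = S"
  using someI_ex[of "\<lambda>xs. distinct xs \<and> set xs = S"] finite_distinct_list by blast

lemma Lv_msum: "finite S \<Longrightarrow> v \<noteq> End \<Longrightarrow> Lv v (msum S) = (\<Union>m\<in>S. Lv v m)"
  unfolding msum_def by (simp add: Lv_sumlist set_msum_enum)

lemma fv_pref [simp]: "fv (pref t m) = fv m"
  unfolding pref_def by (induction t) simp_all

lemma subst_pref [simp]: "subst \<sigma> (pref t m) = pref t (subst \<sigma> m)"
  unfolding pref_def by (induction t) simp_all

lemma fv_sumlist: "fv (sumlist ms) = (\<Union>m\<in>set ms. fv m)"
  by (induction ms rule: sumlist.induct) auto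

lemma fv_msum: "finite S \<Longrightarrow> fv (msum S) = (\<Union>m\<in>S. fv m)"
  unfolding msum_def by (simp add: fv_sumlist set_msum_enum)

lemma subst_closed: "fv m = {} \<Longrightarrow> subst \<sigma> m = m"
  by (induction m) auto

lemma subst_subst: "subst \<sigma> (subst \<tau> m) = subst (\<lambda>x. subst \<sigma> (\<tau> x)) m"
  by (induction m) auto

lemma subst_Var: "subst Var m = m"
  by (induction m) auto

abbreviation yes_no :: "'a mon" where
  "yes_no \<equiv> Sum yes no"

lemma finite_short_lists: "finite {xs :: 'a::finite list. length xs \<le> n \<and> P xs}"
  by (rule finite_subset[OF _ finite_lists_length_le[OF finite_UNIV, of n]]) auto

lemma fv_sbar_k: "fv (sbar_k s k (yes_no :: 'a::finite mon)) = {}"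
  unfolding sbar_k_def sbar_def sbar_le_def setcompr_eq_image
  by (simp add: fv_msum finite_short_lists)

lemma Lv_sbar_le:
  fixes s :: "'a::finite list"
  assumes "v \<noteq> End"
  shows "Lv v (sbar_le s yes_no) = {s' @ z | s' z. length s' \<le> length s \<and> \<not> prefix s' s}"
  using assms unfolding sbar_le_def setcompr_eq_image
  by (cases v) (auto simp: Lv_msum finite_short_lists)

lemma Lv_sbar:
  fixes s :: "'a::finite list"
  assumes "v \<noteq> End"
  shows "Lv v (sbar s yes_no) = Lv v (sbar_le s yes_no) \<union> {s @ a # z | a z. True}"
  using assms unfolding sbar_def setcompr_eq_image
  by (cases v) (auto simp: Lv_msum)

lemma Lv_sbar_k:
  fixes s :: "'a::finite list"
  assumes "v \<noteq> End" and "k \<noteq> 1"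
  shows "Lv v (sbar_k s k yes_no) =
    (\<Union>i\<in>{i. 1 \<le> i \<and> i < k - 1}. (@) (lpow s i) ` Lv v (sbar_le s yes_no))
    \<union> (@) (lpow s (k - 1)) ` Lv v (sbar s yes_no)"
  using assms unfolding sbar_k_def setcompr_eq_image
  by (simp add: Lv_msum)

lemma not_in_Lv_sbar_le:
  fixes s :: "'a::finite list"
  assumes "v \<noteq> End" and "w \<notin> Lv v (sbar_le s yes_no)"
  shows "prefix w s \<or> prefix s w"
proof (rule ccontr)
  assume incomparable: "\<not> (prefix w s \<or> prefix s w)"
  define s' where "s' = take (length s) w"
  have "\<not> prefix s' s"
  proof
    assume "prefix s' s"
    show False
    proof (cases "length w \<le> length s")
      case True
      then show False
        using incomparable \<open>prefix s' s\<close> by (simp add: s'_def)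
    next
      case False
      then have "prefix s s'"
        using prefix_length_prefix[of s s s'] \<open>prefix s' s\<close> by (simp add: s'_def)
      then show False
        using incomparable take_is_prefix[of "length s" w] unfolding s'_def
        by (blast intro: prefix_order.trans)
    qed
  qed
  moreover have "w = s' @ drop (length s) w" and "length s' \<le> length s"
    unfolding s'_def by simp_all
  ultimately have "w \<in> Lv v (sbar_le s yes_no)"
    unfolding Lv_sbar_le[OF assms(1)] by blast
  with assms(2) show False ..
qed

lemma not_in_Lv_sbar:
  fixes s :: "'a::finite list"
  assumes "v \<noteq> End" and "w \<notin> Lv v (sbar s yes_no)"
  shows "prefix w s"
proof -
  have "w \<notin> Lv v (sbar_le s yes_no)"
    using assms(2) by (simp add: Lv_sbar[OF assms(1)])
  then have "prefix w s \<or> prefix s w"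
    by (rule not_in_Lv_sbar_le[OF assms(1)])
  moreover have "w = s" if s_w: "prefix s w"
  proof -
    obtain r where w: "w = s @ r"
      using s_w by (rule prefixE)
    have "s @ a # z \<in> Lv v (sbar s yes_no)" for a z
      by (simp add: Lv_sbar[OF assms(1)])
    then show ?thesis
      using assms(2) w by (metis append_Nil2 neq_Nil_conv)
  qed
  ultimately show ?thesis
    by auto
qed

lemma lpow_0 [simp]: "lpow s 0 = []"
  unfolding lpow_def by simp

lemma lpow_Suc: "lpow s (Suc i) = s @ lpow s i"
  unfolding lpow_def by simp

lemma lpow_1 [simp]: "lpow s (Suc 0) = s"
  unfolding lpow_def by simp

lemma lpow_Suc': "lpow s (Suc i) = lpow s i @ s"
  unfolding lpow_def by (simp add: replicate_append_same[symmetric])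

lemma not_in_Lv_sbar_k:
  fixes s :: "'a::finite list"
  assumes "v \<noteq> End" and "k \<ge> 1" and "s @ u \<notin> Lv v (sbar_k s k yes_no)"
  shows "prefix u (lpow s (k - 1))"
proof (cases "k = 1")
  case True
  then have "prefix (s @ u) s"
    using not_in_Lv_sbar[OF assms(1), of "s @ u" s] assms(3) by (simp add: sbar_k_def)
  then show ?thesis
    using True by simp
next
  case False
  let ?L = "Lv v (sbar_k s k yes_no)"
  \<comment> \<open>Downward induction on \<open>n\<close>: after reading \<open>s\<^sup>n\<close>, every continuation
    incomparable with \<open>s\<close> is caught by the summand \<open>s\<^sup>n.sbar_le(yes + no)\<close>.\<close>
  have "prefix t (lpow s (k - n))" if "n \<le> k - 1" "1 \<le> n" "lpow s n @ t \<notin> ?L" for n t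
    using that
  proof (induction n arbitrary: t rule: inc_induct)
    case base
    then have "prefix t s"
      using assms(1) False by (auto simp: Lv_sbar_k intro: not_in_Lv_sbar)
    then show ?case
      using assms(2) False by simp
  next
    case (step n)
    then have "t \<notin> Lv v (sbar_le s yes_no)"
      using assms(1) False by (auto simp: Lv_sbar_k)
    then have "prefix t s \<or> prefix s t"
      by (rule not_in_Lv_sbar_le[OF assms(1)])
    moreover have k_n: "lpow s (k - n) = s @ lpow s (k - Suc n)"
      using step.hyps by (simp add: lpow_Suc[symmetric] Suc_diff_Suc)
    moreover have "prefix (s @ t') (lpow s (k - n))" if "t = s @ t'" for t'
      using step.IH[of t'] step.prems that k_n by (simp add: lpow_Suc')
    ultimately show ?case
      by (auto simp: prefix_def)
  qed
  then show ?thesis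
    using assms False by simp
qed

lemma prefix_lpow_imp_prefix_append:
  assumes "prefix u (lpow s j)"
  shows "prefix u (s @ u)"
proof -
  have "prefix (s @ u) (lpow s (Suc j))"
    using assms by (simp add: lpow_Suc)
  moreover have "prefix u (lpow s (Suc j))"
    using assms by (simp add: lpow_Suc' prefix_prefix)
  ultimately have "prefix u (s @ u) \<or> prefix (s @ u) u"
    by (simp add: prefix_same_cases)
  moreover have "s = []" if "prefix (s @ u) u"
    using prefix_length_le[OF that] by simp
  ultimately show ?thesis
    by auto
qed

lemma Lv_O2_absorb:
  fixes x :: "'a::finite mon"
  assumes "v \<noteq> End" and "k \<ge> 1"
  shows "(@) s ` Lv v x \<subseteq> Lv v x \<union> Lv v (sbar_k s k yes_no)"
proof
  fix w
  assume "w \<in> (@) s ` Lv v x"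
  then obtain u where u: "u \<in> Lv v x" and w: "w = s @ u"
    by blast
  show "w \<in> Lv v x \<union> Lv v (sbar_k s k yes_no)"
  proof (cases "w \<in> Lv v (sbar_k s k yes_no)")
    case False
    then have "prefix u (s @ u)"
      using not_in_Lv_sbar_k[OF assms] prefix_lpow_imp_prefix_append w by blast
    then obtain z where "s @ u = u @ z"
      by (rule prefixE)
    then show ?thesis
      using Lv_append[OF u] w by simp
  qed simp
qed

lemma Lv_subst_axiom:
  fixes m n :: "'a::finite mon"
  assumes "(m, n) \<in> Evf'" and "v \<noteq> End"
  shows "Lv v (subst \<sigma> m) = Lv v (subst \<sigma> n)"
  using assms(1) unfolding Evf'_def Ev'_def
proof (elim UnE)
  assume "(m, n) \<in> Ev"
  then show ?thesis
    using assms(2) unfolding Ev_def by (auto simp: image_Un split: if_splits)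
next
  assume "(m, n) \<in> {(Sum yes no, Sum (Sum yes no) vx)}"
  then show ?thesis
    using assms(2) by (cases v) auto
next
  assume "(m, n) \<in> O2"
  then obtain s k where mn: "m = Sum (Sum vx (pref s vx)) (sbar_k s k yes_no)"
    "n = Sum vx (sbar_k s k yes_no)" and "k \<ge> 1"
    unfolding O2_def by blast
  have "subst \<sigma> (sbar_k s k yes_no) = sbar_k s k (yes_no :: 'a mon)"
    by (rule subst_closed[OF fv_sbar_k])
  then show ?thesis
    using Lv_O2_absorb[OF assms(2) \<open>k \<ge> 1\<close>, of s "\<sigma> 0"] unfolding mn by auto
qed

lemma Lv_subst_deriv:
  fixes m n :: "'a::finite mon"
  assumes "deriv Evf' m n" and "v \<noteq> End"
  shows "Lv v (subst \<sigma> m) = Lv v (subst \<sigma> n)"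
  using assms(1)
proof (induction arbitrary: \<sigma> rule: deriv.induct)
  case (d_ax m n)
  then show ?case
    using Lv_subst_axiom assms(2) by blast
next
  case (d_subst m n \<tau>)
  then show ?case
    by (simp add: subst_subst)
qed auto

theorem mainTheorem14:
  fixes m n :: "'a::finite mon"
  assumes "deriv Evf' m n"
  shows "meq m n"
proof -
  have "La (subst \<sigma> m) = La (subst \<sigma> n) \<and> Lr (subst \<sigma> m) = Lr (subst \<sigma> n)" for \<sigma>
    using Lv_subst_deriv[OF assms] by (simp add: La_eq_Lv Lr_eq_Lv)
  then show ?thesis
    unfolding meq_def using subst_Var[of m] subst_Var[of n] by metis
qed

end
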